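(* With $\mathbb G$, $\mathbb G^*$ as below, suppose $\hat x\in\mathrm{Range}_1(\mathbb G^* )$ and there exists $x\in\mathbb G(\hat x)$ with $x_i=x_j$ for some $i,j\in[m]$. Then $\hat x_i=\hat x_j$.
   Context: $D$ finite, $m\ge2$, $\Gamma$ a finite set of cost functions $f:D^n\to\mathbb Q\cup\{\infty\}$ with $\mathrm{dom} f=\{x:f(x)<\infty\}$. Maps $\mathbf g=(g_1,\dots,g_m):D^m\to D^m$ act on $x=(x^1,\dots,x^m)\in[D^n]^m$ coordinatewise; $f^m(x)=\frac1m\sum f(x^i)$. Generalized fractional polymorphism of arity $m\to m$: finitely supported probability distribution $\rho$ on maps with $\sum\rho(\mathbf g)f^m(\mathbf g(x))\le f^m(x)$ for all $f\in\Gamma$, $x\in[\mathrm{dom} f]^m$. For $x\in D^m$ and permutation $\pi$, $x^\pi=(x_{\pi(1)},\dots,x_{\pi(m)})$, $\mathbf g^\pi=(g_{\pi(1)},\dots,g_{\pi(m)})$; $\Omega=\{\mathbf g:\mathbf g^\pi(x)=\mathbf g(x^\pi)\ \forall x,\pi\}$. $\omega$: generalized fractional polymorphism of arity $m\to m$ with support in $\Omega$ that contains the support of every other such. $\mathbb G=\{\mathbf g_k\circ\dots\circ\mathbf g_1:k\ge0,\mathbf g_i\in\mathrm{supp}(\omega)\}$, $E=\{(\mathbf g,\mathbf h\circ\mathbf g):\mathbf g\in\mathbb G,\mathbf h\in\mathrm{supp}(\omega)\}$; $\mathbb G^*$ the union of strongly connected components of $(\mathbb G,E)$ without outgoing edges;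 $\mathrm{Range}_1(\mathbb G^* )=\{\mathbf g(y):\mathbf g\in\mathbb G^*,y\in D^m\}$; $\mathbb G(\hat x)=\{\mathbf g(\hat x):\mathbf g\in\mathbb G\}$. *)

theory Defs
  imports "HOL-Library.Extended_Real" "HOL-Combinatorics.Permutations"
begin

(* D is the finite type 'd, [m] is the finite type 'm (m = CARD('m)).
   A tuple in D^m is a function 'm => 'd; a map g : D^m -> D^m has type
   ('m => 'd) => ('m => 'd), its i-th component is (\<lambda>y. g y i).
   A cost function of arity n is a pair (n, f) with f :: 'd list => ereal,
   only evaluated on lists of length n; values lie in Q \<union> {\<infinity>}. *)

definition valued_ok :: "nat \<times> ('d list \<Rightarrow> ereal) \<Rightarrow> bool" where
  "valued_ok nf = (\<forall>xs. snd nf xs = \<infinity> \<or> (\<exists>q::rat. snd nf xs = ereal (real_of_rat q)))"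

definition cdom :: "nat \<times> ('d list \<Rightarrow> ereal) \<Rightarrow> 'd list set" where
  "cdom nf = {xs. length xs = fst nf \<and> snd nf xs < \<infinity>}"

(* coordinatewise action of g on x = (x^1,...,x^m) \<in> [D^n]^m *)
definition apply_map ::
  "(('m \<Rightarrow> 'd) \<Rightarrow> ('m \<Rightarrow> 'd)) \<Rightarrow> nat \<Rightarrow> ('m \<Rightarrow> 'd list) \<Rightarrow> ('m \<Rightarrow> 'd list)" where
  "apply_map g n x = (\<lambda>i. map (\<lambda>k. g (\<lambda>l. x l ! k) i) [0..<n])"

definition fm :: "('d list \<Rightarrow> ereal) \<Rightarrow> ('m::finite \<Rightarrow> 'd list) \<Rightarrow> ereal" where
  "fm f x = ereal (1 / real (card (UNIV :: 'm set))) * (\<Sum>i\<in>UNIV. f (x i))"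

definition supp :: "('a \<Rightarrow> real) \<Rightarrow> 'a set" where
  "supp \<rho> = {g. \<rho> g > 0}"

definition gen_frac_pol ::
  "(nat \<times> ('d list \<Rightarrow> ereal)) set \<Rightarrow> ((('m::finite \<Rightarrow> 'd) \<Rightarrow> ('m \<Rightarrow> 'd)) \<Rightarrow> real) \<Rightarrow> bool" where
  "gen_frac_pol \<Gamma> \<rho> =
     ((\<forall>g. \<rho> g \<ge> 0) \<and> finite (supp \<rho>) \<and> sum \<rho> (supp \<rho>) = 1 \<and>
      (\<forall>(n, f) \<in> \<Gamma>. \<forall>x. (\<forall>i. x i \<in> cdom (n, f)) \<longrightarrow>
          (\<Sum>g\<in>supp \<rho>. ereal (\<rho> g) * fm f (apply_map g n x)) \<le> fm f x))"

(* \<Omega>: g^\<pi>(x) = g(x^\<pi>) for all x, \<pi> ; x^\<pi> = x \<circ> \<pi>, g^\<pi>(x) = g(x) \<circ> \<pi> *)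
definition Omega :: "(('m::finite \<Rightarrow> 'd) \<Rightarrow> ('m \<Rightarrow> 'd)) set" where
  "Omega = {g. \<forall>x \<pi>. \<pi> permutes (UNIV :: 'm set) \<longrightarrow> g x \<circ> \<pi> = g (x \<circ> \<pi>)}"

definition is_omega ::
  "(nat \<times> ('d list \<Rightarrow> ereal)) set \<Rightarrow> ((('m::finite \<Rightarrow> 'd) \<Rightarrow> ('m \<Rightarrow> 'd)) \<Rightarrow> real) \<Rightarrow> bool" where
  "is_omega \<Gamma> \<omega> = (gen_frac_pol \<Gamma> \<omega> \<and> supp \<omega> \<subseteq> Omega \<and>
     (\<forall>\<rho>. gen_frac_pol \<Gamma> \<rho> \<and> supp \<rho> \<subseteq> Omega \<longrightarrow> supp \<rho> \<subseteq> supp \<omega>))"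

inductive_set Gset :: "('a \<Rightarrow> 'a) set \<Rightarrow> ('a \<Rightarrow> 'a) set" for S where
  Gid: "id \<in> Gset S"
| Gcomp: "g \<in> Gset S \<Longrightarrow> h \<in> S \<Longrightarrow> h \<circ> g \<in> Gset S"

definition Gedges :: "('a \<Rightarrow> 'a) set \<Rightarrow> (('a \<Rightarrow> 'a) \<times> ('a \<Rightarrow> 'a)) set" where
  "Gedges S = {(g, h \<circ> g) | g h. g \<in> Gset S \<and> h \<in> S}"

definition scc :: "('a \<Rightarrow> 'a) set \<Rightarrow> ('a \<Rightarrow> 'a) \<Rightarrow> ('a \<Rightarrow> 'a) set" where
  "scc S g = {h \<in> Gset S. (g, h) \<in> (Gedges S)\<^sup>* \<and> (h, g) \<in> (Gedges S)\<^sup>*}"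

definition Gstar :: "('a \<Rightarrow> 'a) set \<Rightarrow> ('a \<Rightarrow> 'a) set" where
  "Gstar S = \<Union>{C \<in> scc S ` Gset S. \<not> (\<exists>u v. (u, v) \<in> Gedges S \<and> u \<in> C \<and> v \<notin> C)}"

definition Range1 :: "('a \<Rightarrow> 'a) set \<Rightarrow> 'a set" where
  "Range1 G = {g y | g y. g \<in> G}"

definition Gorbit :: "('a \<Rightarrow> 'a) set \<Rightarrow> 'a \<Rightarrow> 'a set" where
  "Gorbit S xh = {g xh | g. g \<in> Gset S}"

end

theory Submission
  imports Defs
begin

text \<open>A map in \<open>\<Omega>\<close> commutes with the transposition of \<open>i\<close> and \<open>j\<close>, so it maps tuples with
  \<open>x\<^sub>i = x\<^sub>j\<close> to tuples with the same property, and so does every element of \<open>\<G>\<close>.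
  Conversely, if \<open>x\<close> lies in the orbit of \<open>x\<^sub>h = g y\<close> with \<open>g \<in> \<G>\<^sup>*\<close>, say \<open>x = h x\<^sub>h\<close>, then
  \<open>h \<circ> g\<close> is reachable from \<open>g\<close> and hence lies in the same bottom strongly connected component;
  so \<open>g = k \<circ> h \<circ> g\<close> for some \<open>k \<in> \<G>\<close>, i.e. \<open>x\<^sub>h = k x\<close>.\<close>

lemma Omega_preserves_eq:
  assumes "g \<in> Omega" and "(x :: 'm::finite \<Rightarrow> 'd) i = x j"
  shows "g x i = g x j"
proof -
  let ?\<tau> = "Transposition.transpose i j"
  have "?\<tau> permutes (UNIV :: 'm set)"
    by (rule permutes_swap_id) auto
  with \<open>g \<in> Omega\<close> have "g x \<circ> ?\<tau> = g (x \<circ> ?\<tau>)"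
    unfolding Omega_def by blast
  moreover have "x \<circ> ?\<tau> = x"
    using assms(2) by (auto simp: fun_eq_iff Transposition.transpose_def)
  ultimately have "g x (?\<tau> i) = g x i"
    by (metis comp_apply)
  then show ?thesis by simp
qed

lemma Gset_preserves_eq:
  assumes "k \<in> Gset S" and "S \<subseteq> Omega" and "(x :: 'm::finite \<Rightarrow> 'd) i = x j"
  shows "k x i = k x j"
  using assms(1)
proof induction
  case Gid
  then show ?case using assms(3) by simp
next
  case (Gcomp g h)
  then show ?case using Omega_preserves_eq[of h "g x" i j] assms(2) by auto
qed

lemma Gset_comp_closed:
  assumes "h \<in> Gset S" and "g \<in> Gset S"
  shows "h \<circ> g \<in> Gset S"
  using assms(1)
proof induction
  case Gid
  then show ?case using assms(2) by simp
next
  case (Gcomp f h)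
  then show ?case by (metis Gset.Gcomp comp_assoc)
qed

lemma Gedges_rtrancl_comp:
  assumes "h \<in> Gset S" and "g \<in> Gset S"
  shows "(g, h \<circ> g) \<in> (Gedges S)\<^sup>*"
  using assms(1)
proof induction
  case Gid
  then show ?case by simp
next
  case (Gcomp f h)
  have "(f \<circ> g, h \<circ> (f \<circ> g)) \<in> Gedges S"
    unfolding Gedges_def using Gcomp Gset_comp_closed[OF Gcomp(1) assms(2)] by blast
  with Gcomp.IH show ?case
    by (metis comp_assoc rtrancl.rtrancl_into_rtrancl)
qed

lemma Gedges_rtrancl_imp_comp:
  assumes "(u, v) \<in> (Gedges S)\<^sup>*"
  shows "\<exists>k \<in> Gset S. v = k \<circ> u"
  using assms
proof induction
  case base
  show ?case by (metis Gset.Gid id_comp)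
next
  case (step v w)
  then obtain k where "k \<in> Gset S" "v = k \<circ> u" by blast
  moreover from step(2) obtain h where "h \<in> S" "w = h \<circ> v"
    unfolding Gedges_def by blast
  ultimately show ?case by (metis Gset.Gcomp comp_assoc)
qed

lemma rtrancl_closed_set:
  assumes "(u, v) \<in> r\<^sup>*" and "u \<in> C"
    and "\<not> (\<exists>u v. (u, v) \<in> r \<and> u \<in> C \<and> v \<notin> C)"
  shows "v \<in> C"
  using assms(1,2) by induction (use assms(3) in blast)+

lemma Gstar_comp_returns:
  assumes "g \<in> Gstar S" and "h \<in> Gset S"
  shows "\<exists>k \<in> Gset S. g = k \<circ> (h \<circ> g)"
proof -
  from \<open>g \<in> Gstar S\<close> obtain g\<^sub>0 where "g \<in> scc S g\<^sub>0"
    and closed: "\<not> (\<exists>u v. (u, v) \<in> Gedges S \<and> u \<in> scc S g\<^sub>0 \<and> v \<notin> scc S g\<^sub>0)"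
    unfolding Gstar_def by blast
  then have "g \<in> Gset S" and "(g\<^sub>0, g) \<in> (Gedges S)\<^sup>*"
    unfolding scc_def by blast+
  have "h \<circ> g \<in> scc S g\<^sub>0"
    using rtrancl_closed_set[OF Gedges_rtrancl_comp[OF \<open>h \<in> Gset S\<close> \<open>g \<in> Gset S\<close>]
        \<open>g \<in> scc S g\<^sub>0\<close> closed] .
  then have "(h \<circ> g, g\<^sub>0) \<in> (Gedges S)\<^sup>*"
    unfolding scc_def by blast
  with \<open>(g\<^sub>0, g) \<in> (Gedges S)\<^sup>*\<close> have "(h \<circ> g, g) \<in> (Gedges S)\<^sup>*"
    by simp
  then show ?thesis using Gedges_rtrancl_imp_comp by blast
qed

lemma Gorbit_Range1_Gstar_sym:
  assumes "xh \<in> Range1 (Gstar S)" and "x \<in> Gorbit S xh"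
  shows "xh \<in> Gorbit S x"
proof -
  obtain g y where "xh = g y" "g \<in> Gstar S"
    using assms(1) unfolding Range1_def by blast
  moreover obtain h where "h \<in> Gset S" "x = h xh"
    using assms(2) unfolding Gorbit_def by blast
  ultimately obtain k where "k \<in> Gset S" "g = k \<circ> (h \<circ> g)"
    using Gstar_comp_returns by blast
  with \<open>xh = g y\<close> \<open>x = h xh\<close> have "xh = k x"
    by (metis comp_apply)
  with \<open>k \<in> Gset S\<close> show ?thesis
    unfolding Gorbit_def by blast
qed

theorem proposition7p2:
  fixes \<Gamma> :: "(nat \<times> ('d::finite list \<Rightarrow> ereal)) set"
    and \<omega> :: "(('m::finite \<Rightarrow> 'd) \<Rightarrow> ('m \<Rightarrow> 'd)) \<Rightarrow> real"
    and xh x :: "'m \<Rightarrow> 'd"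
    and i j :: 'm
  assumes "card (UNIV :: 'm set) \<ge> 2"
    and "finite \<Gamma>"
    and "\<forall>nf \<in> \<Gamma>. valued_ok nf"
    and "is_omega \<Gamma> \<omega>"
    and "xh \<in> Range1 (Gstar (supp \<omega>))"
    and "x \<in> Gorbit (supp \<omega>) xh"
    and "x i = x j"
  shows "xh i = xh j"
proof -
  have "supp \<omega> \<subseteq> Omega"
    using \<open>is_omega \<Gamma> \<omega>\<close> unfolding is_omega_def by blast
  obtain k where "k \<in> Gset (supp \<omega>)" "xh = k x"
    using Gorbit_Range1_Gstar_sym[OF assms(5,6)] unfolding Gorbit_def by blast
  then show ?thesis
    using Gset_preserves_eq[OF _ \<open>supp \<omega> \<subseteq> Omega\<close> \<open>x i = x j\<close>] by simp
qed

end
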